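(* For $r>0$, the sphere $\mathcal S_r=\{t\in V_N: S(t)=r\}$, regarded as a hypersurface in the quasi-Euclidean space $(V_N\setminus\{0\},n_{pq}(g;t))$ and equipped with the induced metric $\gamma$, is a space of constant curvature $h^2/r^2$: its Riemann curvature tensor equals $\frac{h^2}{r^2}(\gamma_{ik}\gamma_{jl}-\gamma_{il}\gamma_{jk})$.
   Context: Let $N\ge2$; points of $V_N=\mathbb{R}^N$ are $t=(t^1,\dots,t^N)$; indices $p,q$ run over $1,\dots,N$, repeated indices summed. $(r_{pq})$ is a symmetric positive-definite matrix with $r_{NN}=1$, $r_{Na}=0$ ($a<N$), and $S(t)=\sqrt{r_{pq}t^pt^q}$. Fix $g\in(-2,2)$, $h=\sqrt{1-g^2/4}$, $G=g/h$. The quasi-Euclidean metric tensor is $n_{pq}(g;t)=\frac1{h^2}r_{pq}-\frac14G^2L_pL_q$ with $L_p=r_{pq}t^q/S(t)$. *)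

theory Defs
  imports "HOL-Analysis.Analysis"
begin

definition hpar :: "real \<Rightarrow> real" where
  "hpar g = sqrt (1 - g^2 / 4)"

definition Gpar :: "real \<Rightarrow> real" where
  "Gpar g = g / hpar g"

definition Sfun :: "real^'n^'n \<Rightarrow> real^'n \<Rightarrow> real" where
  "Sfun R t = sqrt (\<Sum>p\<in>UNIV. \<Sum>q\<in>UNIV. R$p$q * t$p * t$q)"

definition Lcov :: "real^'n^'n \<Rightarrow> real^'n \<Rightarrow> 'n \<Rightarrow> real" where
  "Lcov R t p = (\<Sum>q\<in>UNIV. R$p$q * t$q) / Sfun R t"

definition nmetric :: "real^'n^'n \<Rightarrow> real \<Rightarrow> real^'n \<Rightarrow> 'n \<Rightarrow> 'n \<Rightarrow> real" where
  "nmetric R g t p q = R$p$q / (hpar g)^2 - (Gpar g)^2 / 4 * Lcov R t p * Lcov R t q"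

definition partial :: "'m::finite \<Rightarrow> (real^'m \<Rightarrow> real) \<Rightarrow> real^'m \<Rightarrow> real" where
  "partial i f u = frechet_derivative f (at u) (axis i 1)"

fun partials :: "'m::finite list \<Rightarrow> (real^'m \<Rightarrow> real) \<Rightarrow> real^'m \<Rightarrow> real" where
  "partials [] f = f"
| "partials (i # is) f = partial i (partials is f)"

definition smooth_on :: "(real^'m::finite) set \<Rightarrow> (real^'m \<Rightarrow> real) \<Rightarrow> bool" where
  "smooth_on U f \<longleftrightarrow> (\<forall>is. \<forall>u\<in>U. partials is f differentiable (at u))"

definition indmetric ::
  "real^'n^'n \<Rightarrow> real \<Rightarrow> (real^'m::finite \<Rightarrow> real^'n) \<Rightarrow> real^'m \<Rightarrow> real^'m^'m" where
  "indmetric R g \<phi> u = (\<chi> i j. \<Sum>p\<in>UNIV. \<Sum>q\<in>UNIV.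
      nmetric R g (\<phi> u) p q * partial i (\<lambda>w. \<phi> w $ p) u * partial j (\<lambda>w. \<phi> w $ q) u)"

definition christoffel :: "(real^'m::finite \<Rightarrow> real^'m^'m) \<Rightarrow> real^'m \<Rightarrow> 'm \<Rightarrow> 'm \<Rightarrow> 'm \<Rightarrow> real" where
  "christoffel gm u m i j = (\<Sum>l\<in>UNIV. (matrix_inv (gm u))$m$l / 2 *
      (partial i (\<lambda>w. gm w $ l $ j) u + partial j (\<lambda>w. gm w $ l $ i) u
       - partial l (\<lambda>w. gm w $ i $ j) u))"

text \<open>R^m_jkl = d_k Gamma^m_lj - d_l Gamma^m_kj + Gamma^p_lj Gamma^m_kp - Gamma^p_kj Gamma^m_lp,
  i.e. the components of R(d_k,d_l)d_j with R(X,Y)Z = nabla_X nabla_Y Z - nabla_Y nabla_X Z - nabla_[X,Y] Z.\<close>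
definition riemann_up :: "(real^'m::finite \<Rightarrow> real^'m^'m) \<Rightarrow> real^'m \<Rightarrow> 'm \<Rightarrow> 'm \<Rightarrow> 'm \<Rightarrow> 'm \<Rightarrow> real" where
  "riemann_up gm u m j k l =
     partial k (\<lambda>w. christoffel gm w m l j) u - partial l (\<lambda>w. christoffel gm w m k j) u
     + (\<Sum>p\<in>UNIV. christoffel gm u p l j * christoffel gm u m k p
                 - christoffel gm u p k j * christoffel gm u m l p)"

text \<open>R_ijkl = gamma_im R^m_jkl  ( = gamma(R(d_k,d_l)d_j, d_i) ).\<close>
definition riemann :: "(real^'m::finite \<Rightarrow> real^'m^'m) \<Rightarrow> real^'m \<Rightarrow> 'm \<Rightarrow> 'm \<Rightarrow> 'm \<Rightarrow> 'm \<Rightarrow> real" where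
  "riemann gm u i j k l = (\<Sum>m\<in>UNIV. gm u $ i $ m * riemann_up gm u m j k l)"

end

theory Submission
  imports Defs
begin

text \<open>
  Differentiating r_pq phi^p phi^q = r^2 along the sphere gives r_pq phi^p d_i phi^q = 0, so L_p
  vanishes on tangent vectors and the induced quasi-Euclidean metric is gamma = h^-2 b, where
  b_ij = r_pq d_i phi^p d_j phi^q is the metric induced by the Euclidean form r_pq. For r_pq the
  position vector is normal to the sphere, which yields the Gauss formula
  d_i d_j phi = Gamma^m_ij d_m phi - (b_ij / r^2) phi; a constant factor of the metric does not
  change the Christoffel symbols. Differentiating once more and using the symmetry of third
  derivatives gives R_ijkl = h^-2 (b_ik b_jl - b_il b_jk) / r^2,
  which is h^2 / r^2 (gamma_ik gamma_jl - gamma_il gamma_jk).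
\<close>

lemma partial_eqI:
  assumes "(f has_derivative f') (at u)"
  shows "partial i f u = f' (axis i 1)"
  using assms unfolding partial_def by (metis frechet_derivative_at)

lemma partial_cong_open:
  assumes "open U" "u \<in> U" "\<And>w. w \<in> U \<Longrightarrow> f w = g w"
  shows "partial i f u = partial i g u"
proof -
  have "(f has_derivative f') (at u) \<longleftrightarrow> (g has_derivative f') (at u)" for f'
    using has_derivative_transform_within_open[OF _ assms(1,2)] assms(3) by metis
  then show ?thesis unfolding partial_def frechet_derivative_def by simp
qed

lemma differentiable_cong_open:
  assumes "open U" "u \<in> U" "\<And>w. w \<in> U \<Longrightarrow> f w = g w" "f differentiable at u"
  shows "g differentiable at u"
  using has_derivative_transform_within_open[OF _ assms(1,2)] assms(3,4)
  unfolding differentiable_def by metis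

lemma partial_const: "partial i (\<lambda>w. c) u = 0"
  unfolding partial_def by (metis frechet_derivative_at has_derivative_const)

lemma partial_diff:
  assumes "f differentiable at u" "g differentiable at u"
  shows "partial i (\<lambda>w. f w - g w) u = partial i f u - partial i g u"
  using partial_eqI[OF has_derivative_diff[OF assms[unfolded frechet_derivative_works]]]
  by (simp add: partial_def)

lemma partial_cmult:
  assumes "f differentiable at u"
  shows "partial i (\<lambda>w. c * f w) u = c * partial i f u"
  using partial_eqI[OF has_derivative_mult_right[OF assms[unfolded frechet_derivative_works]]]
  by (simp add: partial_def)

lemma partial_shift:
  assumes "f differentiable at (w + c)"
  shows "(\<lambda>v. f (v + c)) differentiable at w"
    and "partial i (\<lambda>v. f (v + c)) w = partial i f (w + c)"
proof -
  have "((\<lambda>v. f (v + c)) has_derivative frechet_derivative f (at (w + c))) (at w)"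
    using has_derivative_compose[OF has_derivative_add[OF has_derivative_ident has_derivative_const]
        assms[unfolded frechet_derivative_works]] by simp
  then show "(\<lambda>v. f (v + c)) differentiable at w"
    and "partial i (\<lambda>v. f (v + c)) w = partial i f (w + c)"
    using partial_eqI[of "\<lambda>v. f (v + c)"] unfolding partial_def[of i f]
    by (auto intro: differentiableI)
qed

definition vpartial :: "'m::finite \<Rightarrow> (real^'m \<Rightarrow> real^'n) \<Rightarrow> real^'m \<Rightarrow> real^'n" where
  "vpartial i F u = (\<chi> p. partial i (\<lambda>w. F w $ p) u)"

lemma vpartial_component [simp]: "vpartial i F u $ p = partial i (\<lambda>w. F w $ p) u"
  by (simp add: vpartial_def)

lemma differentiable_vec_iff:
  fixes F :: "'a::real_normed_vector \<Rightarrow> real^'n"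
  shows "F differentiable at u \<longleftrightarrow> (\<forall>p. (\<lambda>w. F w $ p) differentiable at u)"
  unfolding differentiable_componentwise_within[of F]
  by (auto simp: Basis_vec_def cart_eq_inner_axis)

lemma vpartial_eqI:
  assumes "(F has_derivative F') (at u)"
  shows "vpartial i F u = F' (axis i 1)"
  using partial_eqI[OF bounded_linear.has_derivative[OF bounded_linear_vec_nth assms]]
  by (simp add: vec_eq_iff)

lemma vpartial_frechet:
  assumes "F differentiable at u"
  shows "vpartial i F u = frechet_derivative F (at u) (axis i 1)"
  using assms unfolding frechet_derivative_works by (rule vpartial_eqI)

lemma vpartial_cong_open:
  assumes "open U" "u \<in> U" "\<And>w. w \<in> U \<Longrightarrow> F w = G w"
  shows "vpartial i F u = vpartial i G u"
proof -
  have "partial i (\<lambda>w. F w $ p) u = partial i (\<lambda>w. G w $ p) u" for p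
    using assms(3) by (intro partial_cong_open[OF assms(1,2)]) simp
  then show ?thesis by (simp add: vpartial_def)
qed

lemma vpartial_diff:
  assumes "F differentiable at u" "G differentiable at u"
  shows "vpartial i (\<lambda>w. F w - G w) u = vpartial i F u - vpartial i G u"
  unfolding vpartial_frechet[OF assms(1)] vpartial_frechet[OF assms(2)]
  by (intro vpartial_eqI has_derivative_diff assms[unfolded frechet_derivative_works])

lemma vpartial_sum:
  assumes "\<And>m. m \<in> S \<Longrightarrow> F m differentiable at u"
  shows "vpartial i (\<lambda>w. \<Sum>m\<in>S. F m w) u = (\<Sum>m\<in>S. vpartial i (F m) u)"
  using vpartial_eqI[OF has_derivative_sum[OF assms[unfolded frechet_derivative_works]]]
  by (simp add: vpartial_frechet[OF assms])

lemma vpartial_scaleR: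
  assumes "f differentiable at u" "F differentiable at u"
  shows "vpartial i (\<lambda>w. f w *\<^sub>R F w) u = f u *\<^sub>R vpartial i F u + partial i f u *\<^sub>R F u"
  unfolding vpartial_frechet[OF assms(2)] partial_def
  by (intro vpartial_eqI has_derivative_scaleR assms[unfolded frechet_derivative_works])

section \<open>Symmetry of mixed partial derivatives\<close>

lemma has_real_derivative_along_line:
  fixes F :: "real^'m \<Rightarrow> real"
  assumes "F differentiable at (v + x *\<^sub>R d)"
  shows "((\<lambda>t. F (v + t *\<^sub>R d))
    has_real_derivative frechet_derivative F (at (v + x *\<^sub>R d)) d) (at x)"
proof -
  let ?F' = "frechet_derivative F (at (v + x *\<^sub>R d))"
  have "((\<lambda>t. v + t *\<^sub>R d) has_derivative (\<lambda>t. t *\<^sub>R d)) (at x)"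
    by (auto intro!: derivative_eq_intros)
  from diff_chain_at[OF this assms[unfolded frechet_derivative_works]]
  have "((\<lambda>t. F (v + t *\<^sub>R d)) has_derivative (\<lambda>t. ?F' (t *\<^sub>R d))) (at x)"
    by (simp add: o_def)
  moreover have "linear ?F'"
    using assms frechet_derivative_works has_derivative_linear by blast
  then have "(\<lambda>t. ?F' (t *\<^sub>R d)) = (*) (?F' d)"
    by (simp add: fun_eq_iff linear_scale mult.commute)
  ultimately show ?thesis
    unfolding has_field_derivative_def by simp
qed

lemma mvt_partial:
  fixes f :: "real^'m \<Rightarrow> real"
  assumes s: "s > 0"
    and diff: "\<And>x. 0 \<le> x \<Longrightarrow> x \<le> s \<Longrightarrow> f differentiable at (u + x *\<^sub>R axis i 1)"
  obtains x where "0 < x" "x < s"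
    "f (u + s *\<^sub>R axis i 1) - f u = s * partial i f (u + x *\<^sub>R axis i 1)"
proof -
  have "((\<lambda>t. f (u + t *\<^sub>R axis i 1)) has_real_derivative partial i f (u + x *\<^sub>R axis i 1)) (at x)"
    if "0 \<le> x" "x \<le> s" for x
    unfolding partial_def using diff[OF that] by (rule has_real_derivative_along_line)
  from MVT2[OF s this] obtain x where "0 < x" "x < s"
    "f (u + s *\<^sub>R axis i 1) - f (u + 0 *\<^sub>R axis i 1) = (s - 0) * partial i f (u + x *\<^sub>R axis i 1)"
    by blast
  then show thesis using that by simp
qed

lemma mvt_mixed_partial:
  fixes f :: "real^'m \<Rightarrow> real"
  assumes s: "s > 0"
    and diff: "\<And>x y. 0 \<le> x \<Longrightarrow> x \<le> s \<Longrightarrow> 0 \<le> y \<Longrightarrow> y \<le> s \<Longrightarrow>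
      f differentiable at (u + x *\<^sub>R axis i 1 + y *\<^sub>R axis j 1)"
    and diff_i: "\<And>x y. 0 \<le> x \<Longrightarrow> x \<le> s \<Longrightarrow> 0 \<le> y \<Longrightarrow> y \<le> s \<Longrightarrow>
      partial i f differentiable at (u + x *\<^sub>R axis i 1 + y *\<^sub>R axis j 1)"
  obtains x y where "0 < x" "x < s" "0 < y" "y < s"
    "f (u + s *\<^sub>R axis i 1 + s *\<^sub>R axis j 1) - f (u + s *\<^sub>R axis i 1) - f (u + s *\<^sub>R axis j 1) + f u
      = s^2 * partial j (partial i f) (u + x *\<^sub>R axis i 1 + y *\<^sub>R axis j 1)"
proof -
  define \<psi> where "\<psi> v = f (v + s *\<^sub>R axis j 1) - f v" for v
  have \<psi>: "\<psi> differentiable at (u + x *\<^sub>R axis i 1)"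
    "partial i \<psi> (u + x *\<^sub>R axis i 1)
       = partial i f (u + x *\<^sub>R axis i 1 + s *\<^sub>R axis j 1) - partial i f (u + x *\<^sub>R axis i 1)"
    if "0 \<le> x" "x \<le> s" for x
  proof -
    have "f differentiable at (u + x *\<^sub>R axis i 1 + s *\<^sub>R axis j 1)"
      and "f differentiable at (u + x *\<^sub>R axis i 1)"
      using diff[OF that, of s] diff[OF that, of 0] s by simp_all
    then show "\<psi> differentiable at (u + x *\<^sub>R axis i 1)"
      "partial i \<psi> (u + x *\<^sub>R axis i 1)
         = partial i f (u + x *\<^sub>R axis i 1 + s *\<^sub>R axis j 1) - partial i f (u + x *\<^sub>R axis i 1)"
      unfolding \<psi>_def using partial_shift[of f] by (simp_all add: partial_diff)
  qed
  obtain x where x: "0 < x" "x < s"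
    "\<psi> (u + s *\<^sub>R axis i 1) - \<psi> u = s * partial i \<psi> (u + x *\<^sub>R axis i 1)"
    by (rule mvt_partial[OF s, of \<psi> u i]) (use \<psi>(1) in auto)
  obtain y where y: "0 < y" "y < s"
    "partial i f (u + x *\<^sub>R axis i 1 + s *\<^sub>R axis j 1) - partial i f (u + x *\<^sub>R axis i 1)
       = s * partial j (partial i f) (u + x *\<^sub>R axis i 1 + y *\<^sub>R axis j 1)"
    by (rule mvt_partial[OF s, of "partial i f" "u + x *\<^sub>R axis i 1" j]) (use diff_i x in auto)
  have "partial i \<psi> (u + x *\<^sub>R axis i 1)
      = s * partial j (partial i f) (u + x *\<^sub>R axis i 1 + y *\<^sub>R axis j 1)"
    using \<psi>(2)[of x] x(1,2) y(3) by simp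
  then have "\<psi> (u + s *\<^sub>R axis i 1) - \<psi> u
      = s^2 * partial j (partial i f) (u + x *\<^sub>R axis i 1 + y *\<^sub>R axis j 1)"
    using x(3) by (simp add: power2_eq_square)
  then show thesis
    by (intro that[OF x(1,2) y(1,2)]) (simp add: \<psi>_def algebra_simps)
qed

lemma mixed_partials_meet_near:
  fixes f :: "real^'m \<Rightarrow> real"
  assumes U: "open U" "u \<in> U" and d: "d > 0"
    and diff: "\<And>w. w \<in> U \<Longrightarrow> f differentiable at w"
    and diff_i: "\<And>w. w \<in> U \<Longrightarrow> partial i f differentiable at w"
    and diff_j: "\<And>w. w \<in> U \<Longrightarrow> partial j f differentiable at w"
  obtains p q where "dist p u < d" "dist q u < d"
    "partial j (partial i f) p = partial i (partial j f) q"
proof -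
  obtain d' where d': "d' > 0" "ball u d' \<subseteq> U"
    using U open_contains_ball by blast
  define s where "s = min d d' / 4"
  have s: "s > 0"
    using d d' by (simp add: s_def)
  have near: "dist (u + x *\<^sub>R axis a 1 + y *\<^sub>R axis b 1) u < min d d'"
    if "0 \<le> x" "x \<le> s" "0 \<le> y" "y \<le> s" for x y and a b :: 'm
  proof -
    have "dist (u + x *\<^sub>R axis a 1 + y *\<^sub>R axis b 1) u \<le> x + y"
      using norm_triangle_ineq[of "x *\<^sub>R (axis a 1::real^'m)" "y *\<^sub>R axis b 1"] that
      by (simp add: dist_norm norm_axis_1)
    then show ?thesis
      using that s by (simp add: s_def)
  qed
  have inU: "u + x *\<^sub>R axis a 1 + y *\<^sub>R axis b 1 \<in> U"
    if "0 \<le> x" "x \<le> s" "0 \<le> y" "y \<le> s" for x y and a b :: 'm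
    using near[OF that, of a b] d'(2) by (auto simp: dist_commute)
  obtain x y where xy: "0 < x" "x < s" "0 < y" "y < s"
    "f (u + s *\<^sub>R axis i 1 + s *\<^sub>R axis j 1) - f (u + s *\<^sub>R axis i 1) - f (u + s *\<^sub>R axis j 1) + f u
      = s^2 * partial j (partial i f) (u + x *\<^sub>R axis i 1 + y *\<^sub>R axis j 1)"
    by (rule mvt_mixed_partial[OF s, of f u i j]) (auto intro: inU diff diff_i)
  obtain x' y' where xy': "0 < x'" "x' < s" "0 < y'" "y' < s"
    "f (u + s *\<^sub>R axis j 1 + s *\<^sub>R axis i 1) - f (u + s *\<^sub>R axis j 1) - f (u + s *\<^sub>R axis i 1) + f u
      = s^2 * partial i (partial j f) (u + x' *\<^sub>R axis j 1 + y' *\<^sub>R axis i 1)"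
    by (rule mvt_mixed_partial[OF s, of f u j i]) (auto intro: inU diff diff_j)
  show thesis
  proof (rule that)
    show "dist (u + x *\<^sub>R axis i 1 + y *\<^sub>R axis j 1) u < d"
      "dist (u + x' *\<^sub>R axis j 1 + y' *\<^sub>R axis i 1) u < d"
      using near[of x y i j] near[of x' y' j i] xy xy' by auto
    show "partial j (partial i f) (u + x *\<^sub>R axis i 1 + y *\<^sub>R axis j 1)
        = partial i (partial j f) (u + x' *\<^sub>R axis j 1 + y' *\<^sub>R axis i 1)"
      using xy(5) xy'(5) s by (simp add: algebra_simps)
  qed
qed

lemma partial_commute:
  fixes f :: "real^'m \<Rightarrow> real"
  assumes U: "open U" "u \<in> U"
    and diff: "\<And>w. w \<in> U \<Longrightarrow> f differentiable at w"
    and diff_i: "\<And>w. w \<in> U \<Longrightarrow> partial i f differentiable at w"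
    and diff_j: "\<And>w. w \<in> U \<Longrightarrow> partial j f differentiable at w"
    and cont_ij: "isCont (partial j (partial i f)) u"
    and cont_ji: "isCont (partial i (partial j f)) u"
  shows "partial j (partial i f) u = partial i (partial j f) u"
proof (rule ccontr)
  let ?A = "partial j (partial i f) u" and ?B = "partial i (partial j f) u"
  assume "?A \<noteq> ?B"
  then have e: "dist ?A ?B / 2 > 0" by simp
  obtain d1 where d1: "d1 > 0"
    "\<And>w. dist w u < d1 \<Longrightarrow> dist (partial j (partial i f) w) ?A < dist ?A ?B / 2"
    using cont_ij e unfolding continuous_at_eps_delta by blast
  obtain d2 where d2: "d2 > 0"
    "\<And>w. dist w u < d2 \<Longrightarrow> dist (partial i (partial j f) w) ?B < dist ?A ?B / 2"
    using cont_ji e unfolding continuous_at_eps_delta by blast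
  have "min d1 d2 > 0"
    using d1 d2 by simp
  then obtain p q where pq: "dist p u < min d1 d2" "dist q u < min d1 d2"
    "partial j (partial i f) p = partial i (partial j f) q"
    by (rule mixed_partials_meet_near[OF U _ diff diff_i diff_j])
  then have "dist (partial j (partial i f) p) ?A < dist ?A ?B / 2"
    and "dist (partial j (partial i f) p) ?B < dist ?A ?B / 2"
    using d1(2)[of p] d2(2)[of q] by auto
  then show False
    using dist_triangle3[of ?A ?B "partial j (partial i f) p"] by linarith
qed

lemma linear_axis_expansion:
  fixes L :: "real^'m \<Rightarrow> 'b::real_vector"
  assumes "linear L"
  shows "L x = (\<Sum>i\<in>UNIV. x$i *\<^sub>R L (axis i 1))"
proof -
  have "L x = L (\<Sum>i\<in>UNIV. x$i *\<^sub>R axis i 1)"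
    using basis_expansion[of x] by (simp add: scalar_mult_eq_scaleR)
  then show ?thesis by (simp add: linear_sum[OF assms] linear_scale[OF assms])
qed

lemma range_eq_proper_subspace:
  fixes D :: "real^'m \<Rightarrow> real^'n"
  assumes "linear D" "inj D" "CARD('m) + 1 = CARD('n)"
    and "subspace H" "H \<noteq> UNIV" "range D \<subseteq> H"
  shows "range D = H"
proof -
  have "dim (range D) = CARD('m)"
    using dim_image_eq[OF assms(1), of UNIV] assms(2) by (simp add: inj_on_def)
  moreover have "dim H < dim (UNIV :: (real^'n) set)"
  proof (rule dim_psubset)
    show "span H \<subset> span (UNIV :: (real^'n) set)"
      unfolding span_eq_iff[THEN iffD2, OF assms(4)] using assms(5) by auto
  qed
  ultimately have "span (range D) = span H"
    using dim_eq_span[OF assms(6)] assms(3) by simp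
  moreover have "subspace (range D)"
    using assms(1) by (metis linear_subspace_image subspace_UNIV)
  ultimately show ?thesis
    using assms(4) span_eq_iff by blast
qed

lemma differentiable_prod:
  fixes f :: "'i \<Rightarrow> 'a::real_normed_vector \<Rightarrow> real"
  assumes "\<And>i. i \<in> I \<Longrightarrow> f i differentiable at u"
  shows "(\<lambda>w. \<Prod>i\<in>I. f i w) differentiable at u"
  using has_derivative_prod[OF assms[unfolded frechet_derivative_works]] by (rule differentiableI)

lemma differentiable_det:
  fixes M :: "'a::real_normed_vector \<Rightarrow> real^'k^'k"
  assumes "\<And>i j. (\<lambda>w. M w $ i $ j) differentiable at u"
  shows "(\<lambda>w. det (M w)) differentiable at u"
  unfolding det_def
  by (intro differentiable_sum ballI differentiable_mult differentiable_prod assms) auto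

lemma matrix_inv_right:
  fixes A :: "real^'k^'k"
  assumes "invertible A"
  shows "A ** matrix_inv A = mat 1"
  using assms someI_ex[of "\<lambda>A'. A ** A' = mat 1 \<and> A' ** A = mat 1"]
  unfolding invertible_def matrix_inv_def by blast

lemma matrix_inv_left:
  fixes A :: "real^'k^'k"
  assumes "invertible A"
  shows "matrix_inv A ** A = mat 1"
  using assms someI_ex[of "\<lambda>A'. A ** A' = mat 1 \<and> A' ** A = mat 1"]
  unfolding invertible_def matrix_inv_def by blast

lemma matrix_inv_entry_cramer:
  fixes A :: "real^'k^'k"
  assumes "det A \<noteq> 0"
  shows "matrix_inv A $ m $ l = det (\<chi> i j. if j = m then axis l 1 $ i else A $ i $ j) / det A"
proof -
  have "A *v (\<chi> k. matrix_inv A $ k $ l) = axis l 1"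
    using matrix_inv_right[OF assms[folded invertible_det_nz]]
    by (simp add: vec_eq_iff matrix_vector_mult_def matrix_matrix_mult_def mat_def axis_def)
  then have "(\<chi> k. matrix_inv A $ k $ l)
      = (\<chi> k. det (\<chi> i j. if j = k then axis l 1 $ i else A $ i $ j) / det A)"
    using cramer[OF assms] by blast
  from arg_cong[where f = "\<lambda>x. x $ m", OF this] show ?thesis by simp
qed

lemma differentiable_matrix_inv_entry:
  fixes M :: "'a::real_normed_vector \<Rightarrow> real^'k^'k"
  assumes U: "open U" "u \<in> U" and diff: "\<And>i j. (\<lambda>w. M w $ i $ j) differentiable at u"
    and det: "\<And>w. w \<in> U \<Longrightarrow> det (M w) \<noteq> 0"
  shows "(\<lambda>w. matrix_inv (M w) $ m $ l) differentiable at u"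
proof (rule differentiable_cong_open[OF U])
  have "(\<lambda>w. (\<chi> i j. if j = m then axis l 1 $ i else M w $ i $ j) $ i $ j) differentiable at u"
    for i j
    by (cases "j = m") (simp_all add: diff)
  then show "(\<lambda>w. det (\<chi> i j. if j = m then axis l 1 $ i else M w $ i $ j) / det (M w))
    differentiable at u"
    using U det by (intro differentiable_divide differentiable_det diff) auto
qed (simp add: matrix_inv_entry_cramer det)

definition rform :: "real^'n^'n \<Rightarrow> real^'n \<Rightarrow> real^'n \<Rightarrow> real" where
  "rform R x y = (\<Sum>p\<in>UNIV. \<Sum>q\<in>UNIV. R$p$q * x$p * y$q)"

lemma bilinear_rform: "bilinear (rform R)"
  unfolding bilinear_def
  by (auto intro!: linearI simp: rform_def algebra_simps sum.distrib sum_distrib_left)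

interpretation rform: bounded_bilinear "rform R" for R
  using bilinear_rform by (simp add: bilinear_conv_bounded_bilinear)

lemma rform_commute:
  assumes "\<And>p q. R$p$q = R$q$p"
  shows "rform R x y = rform R y x"
  unfolding rform_def by (subst sum.swap) (simp add: assms mult.commute mult.left_commute)

lemma differentiable_rform:
  assumes "X differentiable at u" "Y differentiable at u"
  shows "(\<lambda>w. rform R (X w) (Y w)) differentiable at u"
  using rform.FDERIV[OF assms[unfolded frechet_derivative_works]] by (rule differentiableI)

lemma partial_rform:
  assumes "X differentiable at u" "Y differentiable at u"
  shows "partial i (\<lambda>w. rform R (X w) (Y w)) u
    = rform R (vpartial i X u) (Y u) + rform R (X u) (vpartial i Y u)"
  using partial_eqI[OF rform.FDERIV[OF assms[unfolded frechet_derivative_works]]]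
  by (simp add: vpartial_frechet assms)

lemma Sfun_eq_sqrt_rform: "Sfun R t = sqrt (rform R t t)"
  by (simp add: Sfun_def rform_def)

lemma Lcov_contract: "(\<Sum>p\<in>UNIV. Lcov R t p * x$p) = rform R x t / Sfun R t"
  unfolding Lcov_def rform_def
  by (simp add: sum_divide_distrib sum_distrib_left sum_distrib_right algebra_simps)

lemma nmetric_form:
  "(\<Sum>p\<in>UNIV. \<Sum>q\<in>UNIV. nmetric R g t p q * x$p * y$q)
     = rform R x y / (hpar g)^2
       - (Gpar g)^2 / 4 * (\<Sum>p\<in>UNIV. Lcov R t p * x$p) * (\<Sum>q\<in>UNIV. Lcov R t q * y$q)"
proof -
  have "(\<Sum>p\<in>UNIV. \<Sum>q\<in>UNIV. nmetric R g t p q * x$p * y$q)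
      = (\<Sum>p\<in>UNIV. \<Sum>q\<in>UNIV. R$p$q * x$p * y$q / (hpar g)^2
           - (Gpar g)^2 / 4 * ((Lcov R t p * x$p) * (Lcov R t q * y$q)))"
    by (intro sum.cong refl) (simp add: nmetric_def algebra_simps)
  also have "\<dots> = rform R x y / (hpar g)^2
      - (Gpar g)^2 / 4 * (\<Sum>p\<in>UNIV. \<Sum>q\<in>UNIV. (Lcov R t p * x$p) * (Lcov R t q * y$q))"
    by (simp only: rform_def sum_subtractf sum_divide_distrib sum_distrib_left)
  finally show ?thesis
    by (simp add: sum_product)
qed

lemma hpar_pos:
  assumes "-2 < g" "g < 2"
  shows "hpar g > 0"
proof -
  have "0 < (2 - g) * (2 + g)"
    using assms by (intro mult_pos_pos) auto
  then show ?thesis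
    unfolding hpar_def by (simp add: algebra_simps power2_eq_square)
qed

lemma rform_eq_square_if_Sfun_eq:
  assumes "Sfun R t = r" "r > 0"
  shows "rform R t t = r^2"
proof -
  have "rform R t t > 0"
    using assms by (metis Sfun_eq_sqrt_rform real_sqrt_gt_0_iff)
  then show ?thesis
    using assms by (metis Sfun_eq_sqrt_rform less_imp_le real_sqrt_pow2)
qed

section \<open>Immersions into a sphere\<close>

locale sphere_immersion =
  fixes R :: "real^'n^'n" and r :: real and U :: "(real^'m) set" and \<phi> :: "real^'m \<Rightarrow> real^'n"
  assumes dim: "CARD('m) + 1 = CARD('n)"
    and R_sym: "\<And>p q. R$p$q = R$q$p"
    and R_pos: "\<And>x. x \<noteq> 0 \<Longrightarrow> rform R x x > 0"
    and r_pos: "r > 0"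
    and open_U: "open U"
    and smooth: "\<And>p. smooth_on U (\<lambda>u. \<phi> u $ p)"
    and immersion: "\<And>u. u \<in> U \<Longrightarrow> inj (frechet_derivative \<phi> (at u))"
    and on_sphere: "\<And>u. u \<in> U \<Longrightarrow> rform R (\<phi> u) (\<phi> u) = r^2"
begin

lemmas rform_sym = rform_commute[OF R_sym]

lemma differentiable_phi_partials:
  assumes "w \<in> U"
  shows "(\<lambda>v. \<phi> v $ p) differentiable at w"
    and "partial j (\<lambda>v. \<phi> v $ p) differentiable at w"
    and "partial i (partial j (\<lambda>v. \<phi> v $ p)) differentiable at w"
    and "partial k (partial i (partial j (\<lambda>v. \<phi> v $ p))) differentiable at w"
proof -
  have "partials is (\<lambda>v. \<phi> v $ p) differentiable at w" for "is"
    using smooth[of p] assms unfolding smooth_on_def by blast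
  from this[of "[]"] this[of "[j]"] this[of "[i, j]"] this[of "[k, i, j]"]
  show "(\<lambda>v. \<phi> v $ p) differentiable at w"
    and "partial j (\<lambda>v. \<phi> v $ p) differentiable at w"
    and "partial i (partial j (\<lambda>v. \<phi> v $ p)) differentiable at w"
    and "partial k (partial i (partial j (\<lambda>v. \<phi> v $ p))) differentiable at w"
    by simp_all
qed

lemma differentiable_vpartials:
  assumes "w \<in> U"
  shows "\<phi> differentiable at w" "vpartial j \<phi> differentiable at w"
    "vpartial i (vpartial j \<phi>) differentiable at w"
  using differentiable_phi_partials[OF assms] by (simp_all add: differentiable_vec_iff)

lemma vpartial_commute:
  assumes w: "w \<in> U"
  shows "vpartial i (vpartial j \<phi>) w = vpartial j (vpartial i \<phi>) w"
proof -
  have "partial i (partial j (\<lambda>v. \<phi> v $ p)) w = partial j (partial i (\<lambda>v. \<phi> v $ p)) w" for p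
    by (rule partial_commute[OF open_U w])
      (use differentiable_phi_partials differentiable_imp_continuous_within w in blast)+
  then show ?thesis by (simp add: vec_eq_iff)
qed

lemma vpartial_commute_outer:
  assumes w: "w \<in> U"
  shows "vpartial k (vpartial l (vpartial j \<phi>)) w = vpartial l (vpartial k (vpartial j \<phi>)) w"
proof -
  have "partial k (partial l (partial j (\<lambda>v. \<phi> v $ p))) w
      = partial l (partial k (partial j (\<lambda>v. \<phi> v $ p))) w" for p
    by (rule partial_commute[OF open_U w])
      (use differentiable_phi_partials differentiable_imp_continuous_within w in blast)+
  then show ?thesis by (simp add: vec_eq_iff)
qed

lemma frechet_derivative_phi:
  assumes w: "w \<in> U"
  shows "frechet_derivative \<phi> (at w) = (\<lambda>x. \<Sum>i\<in>UNIV. x$i *\<^sub>R vpartial i \<phi> w)"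
proof
  fix x
  have "linear (frechet_derivative \<phi> (at w))"
    using differentiable_vpartials(1)[OF w] frechet_derivative_works has_derivative_linear by blast
  then show "frechet_derivative \<phi> (at w) x = (\<Sum>i\<in>UNIV. x$i *\<^sub>R vpartial i \<phi> w)"
    by (subst linear_axis_expansion) (simp_all add: vpartial_frechet differentiable_vpartials w)
qed

lemma linear_tangent: "linear (\<lambda>x. \<Sum>i\<in>UNIV. x$i *\<^sub>R vpartial i \<phi> w)"
  by (rule linearI) (simp_all add: scaleR_add_left sum.distrib scaleR_sum_right)

lemma rform_tangent_position:
  assumes w: "w \<in> U"
  shows "rform R (vpartial i \<phi> w) (\<phi> w) = 0" "rform R (\<phi> w) (vpartial i \<phi> w) = 0"
proof -
  have "partial i (\<lambda>v. rform R (\<phi> v) (\<phi> v)) w = partial i (\<lambda>v. r^2) w"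
    by (rule partial_cong_open[OF open_U w]) (simp add: on_sphere)
  then have "rform R (vpartial i \<phi> w) (\<phi> w) + rform R (\<phi> w) (vpartial i \<phi> w) = 0"
    by (simp add: partial_rform differentiable_vpartials w partial_const)
  then show "rform R (vpartial i \<phi> w) (\<phi> w) = 0" "rform R (\<phi> w) (vpartial i \<phi> w) = 0"
    using rform_sym[of "\<phi> w" "vpartial i \<phi> w"] by simp_all
qed

lemma rform_second_partial_position:
  assumes w: "w \<in> U"
  shows "rform R (vpartial i (vpartial j \<phi>) w) (\<phi> w) = - rform R (vpartial i \<phi> w) (vpartial j \<phi> w)"
proof -
  have "partial i (\<lambda>v. rform R (vpartial j \<phi> v) (\<phi> v)) w = partial i (\<lambda>v. 0) w"
    by (rule partial_cong_open[OF open_U w]) (simp add: rform_tangent_position)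
  then show ?thesis
    using rform_sym[of "vpartial j \<phi> w" "vpartial i \<phi> w"]
    by (simp add: partial_rform differentiable_vpartials w partial_const eq_neg_iff_add_eq_0)
qed

lemma rform_orthogonal_position_imp_tangent:
  assumes w: "w \<in> U" and v: "rform R v (\<phi> w) = 0"
  shows "\<exists>z. v = (\<Sum>i\<in>UNIV. z$i *\<^sub>R vpartial i \<phi> w)"
proof -
  let ?H = "{v. rform R v (\<phi> w) = 0}"
  have "subspace ?H"
    by (auto simp: subspace_def rform.add_left rform.scaleR_left rform.zero_left)
  moreover have "?H \<noteq> UNIV"
  proof -
    have "\<phi> w \<notin> ?H"
      using on_sphere[OF w] r_pos by simp
    then show ?thesis by blast
  qed
  moreover have "range (\<lambda>x. \<Sum>i\<in>UNIV. x$i *\<^sub>R vpartial i \<phi> w) \<subseteq> ?H"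
    by (auto simp: rform.sum_left rform.scaleR_left rform_tangent_position[OF w])
  ultimately have "range (\<lambda>x. \<Sum>i\<in>UNIV. x$i *\<^sub>R vpartial i \<phi> w) = ?H"
    using range_eq_proper_subspace[OF linear_tangent _ dim] immersion[OF w]
    unfolding frechet_derivative_phi[OF w] by blast
  then show ?thesis
    using v by blast
qed

lemma indmetric_eq:
  assumes w: "w \<in> U"
  shows "indmetric R g \<phi> w $ i $ j = rform R (vpartial i \<phi> w) (vpartial j \<phi> w) / (hpar g)^2"
proof -
  have "indmetric R g \<phi> w $ i $ j
      = (\<Sum>p\<in>UNIV. \<Sum>q\<in>UNIV. nmetric R g (\<phi> w) p q * vpartial i \<phi> w $ p * vpartial j \<phi> w $ q)"
    by (simp add: indmetric_def)
  then show ?thesis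
    unfolding nmetric_form Lcov_contract rform_tangent_position[OF w] by simp
qed

end

section \<open>The Gauss equation\<close>

locale sphere_immersion_metric = sphere_immersion +
  fixes c :: real and \<gamma> :: "real^'m \<Rightarrow> real^'m^'m"
  assumes c_pos: "c > 0"
    and metric: "\<And>w i j. w \<in> U \<Longrightarrow> \<gamma> w $ i $ j = c * rform R (vpartial i \<phi> w) (vpartial j \<phi> w)"
begin

lemma differentiable_metric:
  assumes u: "u \<in> U"
  shows "(\<lambda>w. \<gamma> w $ i $ j) differentiable at u"
  by (rule differentiable_cong_open[OF open_U u,
        of "\<lambda>w. c * rform R (vpartial i \<phi> w) (vpartial j \<phi> w)"])
    (simp_all add: metric differentiable_rform differentiable_vpartials u)

lemma partial_metric:
  assumes w: "w \<in> U"
  shows "partial k (\<lambda>v. \<gamma> v $ i $ j) w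
    = c * (rform R (vpartial k (vpartial i \<phi>) w) (vpartial j \<phi> w)
           + rform R (vpartial i \<phi> w) (vpartial k (vpartial j \<phi>) w))"
proof -
  have "partial k (\<lambda>v. \<gamma> v $ i $ j) w
      = partial k (\<lambda>v. c * rform R (vpartial i \<phi> v) (vpartial j \<phi> v)) w"
    by (rule partial_cong_open[OF open_U w]) (simp add: metric)
  then show ?thesis
    by (simp add: partial_cmult partial_rform differentiable_rform differentiable_vpartials w)
qed

lemma differentiable_partial_metric:
  assumes u: "u \<in> U"
  shows "partial k (\<lambda>v. \<gamma> v $ i $ j) differentiable at u"
  by (rule differentiable_cong_open[OF open_U u,
        of "\<lambda>w. c * (rform R (vpartial k (vpartial i \<phi>) w) (vpartial j \<phi> w)
                   + rform R (vpartial i \<phi> w) (vpartial k (vpartial j \<phi>) w))"])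
    (simp_all add: partial_metric differentiable_rform differentiable_vpartials u)

lemma det_metric_nonzero:
  assumes w: "w \<in> U"
  shows "det (\<gamma> w) \<noteq> 0"
proof -
  let ?T = "\<lambda>x. \<Sum>i\<in>UNIV. x$i *\<^sub>R vpartial i \<phi> w"
  have "x = 0" if "\<gamma> w *v x = 0" for x
  proof -
    have "c * rform R (vpartial i \<phi> w) (?T x) = (\<gamma> w *v x) $ i" for i
      by (simp add: matrix_vector_mult_def metric w rform.sum_right rform.scaleR_right
          sum_distrib_left algebra_simps)
    then have "rform R (vpartial i \<phi> w) (?T x) = 0" for i
      using that c_pos by simp
    then have "rform R (?T x) (?T x) = 0"
      by (simp add: rform.sum_left rform.scaleR_left)
    then have "?T x = ?T 0"
      using R_pos[of "?T x"] by auto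
    moreover have "inj ?T"
      using immersion[OF w] by (simp add: frechet_derivative_phi[OF w])
    ultimately show "x = 0"
      by (rule injD[rotated])
  qed
  moreover have lin: "linear ((*v) (\<gamma> w))"
    by (rule matrix_vector_mul_linear)
  ultimately have "inj ((*v) (\<gamma> w))"
    by (simp add: linear_injective_0)
  then show ?thesis
    using det_nz_iff_inj[OF lin] by (simp add: matrix_of_matrix_vector_mul)
qed

lemma christoffel_eq_tangential_part:
  assumes w: "w \<in> U"
  shows "christoffel \<gamma> w m i j
    = (matrix_inv (\<gamma> w) *v (\<chi> l. c * rform R (vpartial l \<phi> w) (vpartial i (vpartial j \<phi>) w))) $ m"
proof -
  have "partial i (\<lambda>w. \<gamma> w $ l $ j) w + partial j (\<lambda>w. \<gamma> w $ l $ i) w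
        - partial l (\<lambda>w. \<gamma> w $ i $ j) w
      = 2 * (c * rform R (vpartial l \<phi> w) (vpartial i (vpartial j \<phi>) w))" for l
    unfolding partial_metric[OF w] vpartial_commute[OF w, of l i] vpartial_commute[OF w, of l j]
      vpartial_commute[OF w, of j i]
    by (simp add: rform_sym[of "vpartial _ (vpartial _ \<phi>) w"] algebra_simps)
  then show ?thesis
    by (simp add: christoffel_def matrix_vector_mult_def)
qed

lemma gauss_formula:
  assumes w: "w \<in> U"
  shows "vpartial i (vpartial j \<phi>) w
    = (\<Sum>m\<in>UNIV. christoffel \<gamma> w m i j *\<^sub>R vpartial m \<phi> w)
      - (rform R (vpartial i \<phi> w) (vpartial j \<phi> w) / r^2) *\<^sub>R \<phi> w"
proof -
  define v where "v = vpartial i (vpartial j \<phi>) w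
    + (rform R (vpartial i \<phi> w) (vpartial j \<phi> w) / r^2) *\<^sub>R \<phi> w"
  have "rform R v (\<phi> w) = 0"
    unfolding v_def using r_pos
    by (simp add: rform.add_left rform.scaleR_left rform_second_partial_position w on_sphere)
  then obtain z where z: "v = (\<Sum>m\<in>UNIV. z$m *\<^sub>R vpartial m \<phi> w)"
    using rform_orthogonal_position_imp_tangent[OF w] by blast
  have b: "vpartial i (vpartial j \<phi>) w
      = (\<Sum>m\<in>UNIV. z$m *\<^sub>R vpartial m \<phi> w) - (rform R (vpartial i \<phi> w) (vpartial j \<phi> w) / r^2) *\<^sub>R \<phi> w"
    unfolding z[symmetric] v_def by simp
  have "c * rform R (vpartial l \<phi> w) (vpartial i (vpartial j \<phi>) w) = (\<gamma> w *v z) $ l" for l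
  proof -
    have "c * rform R (vpartial l \<phi> w) (vpartial i (vpartial j \<phi>) w)
        = c * (\<Sum>m\<in>UNIV. z$m * rform R (vpartial l \<phi> w) (vpartial m \<phi> w))"
      unfolding b
      by (simp add: rform.diff_right rform.scaleR_right rform.sum_right rform_tangent_position[OF w])
    also have "\<dots> = (\<gamma> w *v z) $ l"
      by (simp add: matrix_vector_mult_def metric w sum_distrib_left mult.commute mult.left_commute)
    finally show ?thesis .
  qed
  then have "(\<chi> l. c * rform R (vpartial l \<phi> w) (vpartial i (vpartial j \<phi>) w)) = \<gamma> w *v z"
    by (simp add: vec_eq_iff)
  then have "christoffel \<gamma> w m i j = z $ m" for m
    using matrix_inv_left[OF det_metric_nonzero[OF w, folded invertible_det_nz]]
    by (simp add: christoffel_eq_tangential_part[OF w] matrix_vector_mul_assoc)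
  then show ?thesis
    using b by simp
qed

lemma differentiable_christoffel:
  assumes u: "u \<in> U"
  shows "(\<lambda>w. christoffel \<gamma> w m i j) differentiable at u"
  unfolding christoffel_def
  by (intro differentiable_sum ballI differentiable_mult differentiable_divide differentiable_add
      differentiable_diff differentiable_const differentiable_partial_metric[OF u]
      differentiable_matrix_inv_entry[OF open_U u differentiable_metric[OF u] det_metric_nonzero])
    auto

lemma vpartial_gauss_formula:
  assumes u: "u \<in> U"
  shows "vpartial k (vpartial l (vpartial j \<phi>)) u
    = (\<Sum>m\<in>UNIV. christoffel \<gamma> u m l j *\<^sub>R vpartial k (vpartial m \<phi>) u
                 + partial k (\<lambda>w. christoffel \<gamma> w m l j) u *\<^sub>R vpartial m \<phi> u)
      - (partial k (\<lambda>w. rform R (vpartial l \<phi> w) (vpartial j \<phi> w) / r^2) u *\<^sub>R \<phi> u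
         + (rform R (vpartial l \<phi> u) (vpartial j \<phi> u) / r^2) *\<^sub>R vpartial k \<phi> u)"
proof -
  have "vpartial k (vpartial l (vpartial j \<phi>)) u
      = vpartial k (\<lambda>w. (\<Sum>m\<in>UNIV. christoffel \<gamma> w m l j *\<^sub>R vpartial m \<phi> w)
          - (rform R (vpartial l \<phi> w) (vpartial j \<phi> w) / r^2) *\<^sub>R \<phi> w) u"
    by (rule vpartial_cong_open[OF open_U u]) (rule gauss_formula)
  also have "\<dots> = (\<Sum>m\<in>UNIV. vpartial k (\<lambda>w. christoffel \<gamma> w m l j *\<^sub>R vpartial m \<phi> w) u)
      - vpartial k (\<lambda>w. (rform R (vpartial l \<phi> w) (vpartial j \<phi> w) / r^2) *\<^sub>R \<phi> w) u"
    using r_pos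
    by (simp add: vpartial_diff vpartial_sum differentiable_christoffel differentiable_vpartials
        differentiable_rform u)
  finally show ?thesis
    using r_pos
    by (simp add: vpartial_scaleR differentiable_christoffel differentiable_vpartials
        differentiable_rform u)
qed

lemma christoffel_terms_eq_third_partial:
  assumes u: "u \<in> U"
  shows "(\<Sum>m\<in>UNIV. \<gamma> u $ i $ m * (partial k (\<lambda>w. christoffel \<gamma> w m l j) u
            + (\<Sum>p\<in>UNIV. christoffel \<gamma> u p l j * christoffel \<gamma> u m k p)))
    = c * rform R (vpartial i \<phi> u) (vpartial k (vpartial l (vpartial j \<phi>)) u)
      + c / r^2 * rform R (vpartial l \<phi> u) (vpartial j \<phi> u)
          * rform R (vpartial i \<phi> u) (vpartial k \<phi> u)"
proof -
  have second_partial: "c * rform R (vpartial i \<phi> u) (vpartial k (vpartial p \<phi>) u)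
      = (\<Sum>m\<in>UNIV. christoffel \<gamma> u m k p * \<gamma> u $ i $ m)" for p
    by (simp add: gauss_formula[OF u, of k p] rform.diff_right rform.sum_right rform.scaleR_right
        rform_tangent_position[OF u] metric[OF u] sum_distrib_left mult.commute mult.left_commute)
  have "(\<Sum>m\<in>UNIV. \<gamma> u $ i $ m * (\<Sum>p\<in>UNIV. christoffel \<gamma> u p l j * christoffel \<gamma> u m k p))
      = (\<Sum>p\<in>UNIV. christoffel \<gamma> u p l j * (\<Sum>m\<in>UNIV. christoffel \<gamma> u m k p * \<gamma> u $ i $ m))"
    unfolding sum_distrib_left by (subst sum.swap) (simp add: ac_simps)
  also have "\<dots> = (\<Sum>p\<in>UNIV. christoffel \<gamma> u p l j
      * (c * rform R (vpartial i \<phi> u) (vpartial k (vpartial p \<phi>) u)))"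
    by (simp add: second_partial)
  finally show ?thesis
    using r_pos
    by (simp add: vpartial_gauss_formula[OF u] rform.diff_right rform.add_right rform.sum_right
        rform.scaleR_right rform_tangent_position[OF u] metric[OF u] distrib_left sum.distrib
        sum_distrib_left algebra_simps)
qed

lemma riemann_eq_constant_curvature:
  assumes u: "u \<in> U"
  shows "riemann \<gamma> u i j k l = (\<gamma> u $ i $ k * \<gamma> u $ j $ l - \<gamma> u $ i $ l * \<gamma> u $ j $ k) / (c * r^2)"
proof -
  let ?T = "\<lambda>k l. \<Sum>m\<in>UNIV. \<gamma> u $ i $ m * (partial k (\<lambda>w. christoffel \<gamma> w m l j) u
            + (\<Sum>p\<in>UNIV. christoffel \<gamma> u p l j * christoffel \<gamma> u m k p))"
  have "riemann \<gamma> u i j k l = ?T k l - ?T l k"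
    unfolding riemann_def riemann_up_def sum_subtractf[symmetric]
    by (intro sum.cong refl) (simp add: sum_subtractf algebra_simps)
  also have "\<dots> = c / r^2
      * (rform R (vpartial l \<phi> u) (vpartial j \<phi> u) * rform R (vpartial i \<phi> u) (vpartial k \<phi> u)
         - rform R (vpartial k \<phi> u) (vpartial j \<phi> u) * rform R (vpartial i \<phi> u) (vpartial l \<phi> u))"
    unfolding christoffel_terms_eq_third_partial[OF u] vpartial_commute_outer[OF u, of k l j]
    by (simp add: algebra_simps)
  also have "\<dots> = (\<gamma> u $ i $ k * \<gamma> u $ j $ l - \<gamma> u $ i $ l * \<gamma> u $ j $ k) / (c * r^2)"
    using c_pos r_pos
    by (simp add: metric[OF u] rform_sym[of "vpartial j \<phi> u"] field_simps power2_eq_square)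
  finally show ?thesis .
qed

end

theorem theorem2p17:
  fixes R :: "real^'n^'n" and nN :: 'n and g r :: real
    and U :: "(real^'m) set" and \<phi> :: "real^'m \<Rightarrow> real^'n"
  assumes dimN: "CARD('n) \<ge> 2"
    and dimM: "CARD('m) + 1 = CARD('n)"
    and Rsym: "\<forall>p q. R$p$q = R$q$p"
    and Rpos: "\<forall>x::real^'n. x \<noteq> 0 \<longrightarrow> (\<Sum>p\<in>UNIV. \<Sum>q\<in>UNIV. R$p$q * x$p * x$q) > 0"
    and RNN: "R$nN$nN = 1"
    and RNa: "\<forall>a. a \<noteq> nN \<longrightarrow> R$nN$a = 0"
    and g: "-2 < g" "g < 2"
    and r: "r > 0"
    and U: "open U"
    and smooth: "\<forall>p. smooth_on U (\<lambda>u. \<phi> u $ p)"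
    and immersion: "\<forall>u\<in>U. inj (frechet_derivative \<phi> (at u))"
    and onsphere: "\<forall>u\<in>U. Sfun R (\<phi> u) = r"
  shows "\<forall>u\<in>U. \<forall>i j k l.
           riemann (indmetric R g \<phi>) u i j k l
             = (hpar g)^2 / r^2 *
               (indmetric R g \<phi> u $ i $ k * indmetric R g \<phi> u $ j $ l
                - indmetric R g \<phi> u $ i $ l * indmetric R g \<phi> u $ j $ k)"
proof (intro ballI allI)
  fix u i j k l
  assume u: "u \<in> U"
  have h: "hpar g \<noteq> 0"
    using hpar_pos[OF g] by simp
  interpret sphere_immersion R r U \<phi>
  proof
    show "rform R x x > 0" if "x \<noteq> 0" for x
      using Rpos that by (simp add: rform_def)
    show "rform R (\<phi> u) (\<phi> u) = r^2" if "u \<in> U" for u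
      using onsphere that r by (simp add: rform_eq_square_if_Sfun_eq)
  qed (use dimM Rsym r U smooth immersion in auto)
  interpret sphere_immersion_metric R r U \<phi> "1 / (hpar g)^2" "indmetric R g \<phi>"
    using h by unfold_locales (simp_all add: indmetric_eq)
  have scale: "x / (1 / (hpar g)^2 * r^2) = (hpar g)^2 / r^2 * x" for x
    using h r by (simp add: field_simps)
  show "riemann (indmetric R g \<phi>) u i j k l
    = (hpar g)^2 / r^2 * (indmetric R g \<phi> u $ i $ k * indmetric R g \<phi> u $ j $ l
                          - indmetric R g \<phi> u $ i $ l * indmetric R g \<phi> u $ j $ k)"
    unfolding riemann_eq_constant_curvature[OF u] scale ..
qed

end
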